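(* Let $G$ be a tree with $p\ge 2$ vertices $v_1,\dots,v_p$. Then for every $i=1,\dots,p$, $\psi_i(\pm1)=(\mp1)^{p-1}$, and $\widetilde\psi(\pm1)=(p-1)(\mp1)^{p-2}$.
   Context: For a finite simple graph $G$ with vertices $v_1,\dots,v_p$, let $D=\mathrm{diag}(d(v_1),\dots,d(v_p))$ be the degree matrix and $A$ the adjacency matrix ($a_{vw}=1$ if $v,w$ adjacent, else $0$). Let $\psi(z)=\det(-zD+A)$ and, for each $i$, $\psi_i(z)=\det(-zD_i+A_i)$ where $D_i$, $A_i$ are the principal submatrices of $D$, $A$ obtained by deleting the row and column corresponding to $v_i$. For a tree, $\psi(\pm1)=0$ (known fact), and $\widetilde\psi(z):=\psi(z)/(z^2-1)$ is a polynomial. *)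

theory Defs
  imports "HOL-Computational_Algebra.Polynomial" "HOL-Combinatorics.Permutations"
begin

definition simple_graph :: "'a set \<Rightarrow> ('a \<Rightarrow> 'a \<Rightarrow> bool) \<Rightarrow> bool" where
  "simple_graph V E \<longleftrightarrow> finite V \<and> (\<forall>u v. E u v \<longrightarrow> u \<in> V \<and> v \<in> V)
     \<and> (\<forall>u v. E u v \<longrightarrow> E v u) \<and> (\<forall>u. \<not> E u u)"

definition edges :: "('a \<Rightarrow> 'a \<Rightarrow> bool) \<Rightarrow> 'a set set" where
  "edges E = {{u, v} | u v. E u v}"

definition connected_graph :: "'a set \<Rightarrow> ('a \<Rightarrow> 'a \<Rightarrow> bool) \<Rightarrow> bool" where
  "connected_graph V E \<longleftrightarrow> (\<forall>u\<in>V. \<forall>v\<in>V. E\<^sup>*\<^sup>* u v)"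

definition is_tree :: "'a set \<Rightarrow> ('a \<Rightarrow> 'a \<Rightarrow> bool) \<Rightarrow> bool" where
  "is_tree V E \<longleftrightarrow> simple_graph V E \<and> V \<noteq> {} \<and> connected_graph V E
     \<and> card (edges E) = card V - 1"

definition degree :: "'a set \<Rightarrow> ('a \<Rightarrow> 'a \<Rightarrow> bool) \<Rightarrow> 'a \<Rightarrow> nat" where
  "degree V E v = card {w \<in> V. E v w}"

definition det_on :: "'a set \<Rightarrow> ('a \<Rightarrow> 'a \<Rightarrow> 'b::comm_ring_1) \<Rightarrow> 'b" where
  "det_on S M = (\<Sum>p\<in>{p. p permutes S}. of_int (sign p) * (\<Prod>i\<in>S. M i (p i)))"

definition psi_matrix :: "'a set \<Rightarrow> ('a \<Rightarrow> 'a \<Rightarrow> bool) \<Rightarrow> 'a \<Rightarrow> 'a \<Rightarrow> real poly" where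
  "psi_matrix V E u w =
     (if u = w then [:0, - of_nat (degree V E u):] else 0) + (if E u w then 1 else 0)"

definition psi :: "'a set \<Rightarrow> ('a \<Rightarrow> 'a \<Rightarrow> bool) \<Rightarrow> real poly" where
  "psi V E = det_on V (psi_matrix V E)"

text \<open>psi_i: delete row and column of vertex v (degrees stay those of G).\<close>
definition psi_del :: "'a set \<Rightarrow> ('a \<Rightarrow> 'a \<Rightarrow> bool) \<Rightarrow> 'a \<Rightarrow> real poly" where
  "psi_del V E v = det_on (V - {v}) (psi_matrix V E)"

text \<open>psi tilde = psi / (z^2 - 1) (exact division for trees).\<close>
definition psi_tilde :: "'a set \<Rightarrow> ('a \<Rightarrow> 'a \<Rightarrow> bool) \<Rightarrow> real poly" where
  "psi_tilde V E = psi V E div [:-1, 0, 1:]"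

end

theory Submission
  imports Defs
begin

text \<open>
  Induction on the tree by removing a leaf l with neighbour u; let G' be the remaining tree.
  Expanding the determinants along row and column l, and noting that the degree of u drops
  by one, gives
    psi(G) = -z psi(G') + (z^2 - 1) psi_u(G'),    psi_l(G) = psi(G') - z psi_u(G'),
    psi_u(G) = -z psi_u(G'),    psi_v(G) = -z psi_v(G') + (z^2 - 1) (a minor of G') otherwise.
  So z^2 - 1 divides psi(G), with quotient psi~(G) = -z psi~(G') + psi_u(G'). At z = 1 and
  z = -1, where z^2 - 1 and psi(G') vanish, each psi_v gets multiplied by -z, and
  psi~(G) = -z psi~(G') + (-z)^(p-2); both values then follow by induction on p. Evaluating at
  all x with x^2 = 1 treats the two signs at once.
\<close>

lemma det_on_cong:
  assumes "\<And>i j. i \<in> S \<Longrightarrow> j \<in> S \<Longrightarrow> M i j = N i j"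
  shows "det_on S M = det_on S N"
  unfolding det_on_def
proof (intro sum.cong refl arg_cong[where f = "(*) _"] prod.cong)
  fix p i assume "p \<in> {p. p permutes S}" "i \<in> S"
  then show "M i (p i) = N i (p i)"
    using assms permutes_in_image by fastforce
qed

lemma sum_permutes_if_fixed:
  assumes "finite S" "u \<in> S"
  shows "(\<Sum>p | p permutes S. if p u = u then f p else 0) = (\<Sum>p | p permutes S - {u}. f p)"
proof -
  have "{p \<in> {p. p permutes S}. p u = u} = {p. p permutes S - {u}}"
    using assms(2) by (auto intro: permutes_superset permutes_subset permutes_not_in)
  then show ?thesis
    using sum.inter_filter[of "{p. p permutes S}" f "\<lambda>p. p u = u"]
    by (simp add: assms(1) finite_permutations)
qed

lemma det_on_row_add:
  fixes M K N :: "'a \<Rightarrow> 'a \<Rightarrow> 'b::comm_ring_1"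
  assumes "finite S" "u \<in> S"
    and "\<And>j. j \<in> S \<Longrightarrow> N u j = M u j + K u j"
    and "\<And>i j. i \<in> S - {u} \<Longrightarrow> j \<in> S \<Longrightarrow> N i j = M i j \<and> K i j = M i j"
  shows "det_on S N = det_on S M + det_on S K"
proof -
  have "(\<Prod>i\<in>S. N i (p i)) = (\<Prod>i\<in>S. M i (p i)) + (\<Prod>i\<in>S. K i (p i))"
    if "p permutes S" for p
  proof -
    have p_in: "\<And>i. i \<in> S \<Longrightarrow> p i \<in> S"
      using permutes_in_image[OF that] by simp
    have rest: "(\<Prod>i\<in>S - {u}. N i (p i)) = (\<Prod>i\<in>S - {u}. M i (p i))"
               "(\<Prod>i\<in>S - {u}. K i (p i)) = (\<Prod>i\<in>S - {u}. M i (p i))"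
      using assms(4) p_in by (auto intro!: prod.cong)
    show ?thesis
      using assms(1-3) p_in rest by (simp add: prod.remove distrib_right)
  qed
  then show ?thesis
    unfolding det_on_def by (simp add: sum.distrib distrib_left)
qed

lemma det_on_diagonal_row:
  fixes M :: "'a \<Rightarrow> 'a \<Rightarrow> 'b::comm_ring_1"
  assumes "finite S" "l \<in> S" "\<And>j. j \<in> S \<Longrightarrow> j \<noteq> l \<Longrightarrow> M l j = 0"
  shows "det_on S M = M l l * det_on (S - {l}) M"
proof -
  have summand: "of_int (sign p) * (\<Prod>i\<in>S. M i (p i))
      = (if p l = l then M l l * (of_int (sign p) * (\<Prod>i\<in>S - {l}. M i (p i))) else 0)"
    if "p permutes S" for p
    using assms permutes_in_image[OF that, of l] by (simp add: prod.remove)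
  have "det_on S M = (\<Sum>p | p permutes S.
      if p l = l then M l l * (of_int (sign p) * (\<Prod>i\<in>S - {l}. M i (p i))) else 0)"
    unfolding det_on_def using summand by (intro sum.cong) auto
  also have "\<dots> = M l l * det_on (S - {l}) M"
    unfolding sum_permutes_if_fixed[OF assms(1,2)] det_on_def by (simp add: sum_distrib_left)
  finally show ?thesis .
qed

lemma det_on_add_diagonal:
  fixes M N :: "'a \<Rightarrow> 'a \<Rightarrow> 'b::comm_ring_1"
  assumes fin: "finite S" and "u \<in> S"
    and "\<And>i j. i \<in> S \<Longrightarrow> j \<in> S \<Longrightarrow> N i j = M i j + (if i = u \<and> j = u then c else 0)"
  shows "det_on S N = det_on S M + c * det_on (S - {u}) M"
proof -
  define K where "K i j = (if i = u then if j = u then c else 0 else M i j)" for i j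
  have "det_on S N = det_on S M + det_on S K"
    using assms(2,3) by (intro det_on_row_add[OF fin \<open>u \<in> S\<close>]) (auto simp: K_def)
  also have "det_on S K = c * det_on (S - {u}) M"
    using det_on_diagonal_row[OF fin \<open>u \<in> S\<close>, of K] det_on_cong[of "S - {u}" K M]
    by (simp add: K_def)
  finally show ?thesis .
qed

lemma sum_permutes_if_swapped:
  assumes "finite S" "l \<in> S" "u \<in> S"
  shows "(\<Sum>p | p permutes S. if p l = u \<and> p u = l then f p else 0)
       = (\<Sum>q | q permutes S - {l, u}. f (transpose l u \<circ> q))"
proof -
  have involution: "transpose l u \<circ> (transpose l u \<circ> p) = p" for p :: "'a \<Rightarrow> 'a"
    by (simp add: fun_eq_iff)
  have "(\<Sum>p | p permutes S. if p l = u \<and> p u = l then f p else 0)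
      = (\<Sum>p | p permutes S \<and> p l = u \<and> p u = l. f p)"
    using sum.inter_filter[of "{p. p permutes S}" f "\<lambda>p. p l = u \<and> p u = l"]
    by (simp add: assms(1) finite_permutations)
  also have "\<dots> = (\<Sum>q | q permutes S - {l, u}. f (transpose l u \<circ> q))"
  proof (rule sum.reindex_bij_witness[where i = "\<lambda>q. transpose l u \<circ> q" and j = "\<lambda>p. transpose l u \<circ> p"])
    fix p assume "p \<in> {p. p permutes S \<and> p l = u \<and> p u = l}"
    then have "p permutes S" "p l = u" "p u = l" by auto
    then have "transpose l u \<circ> p permutes S" "(transpose l u \<circ> p) l = l" "(transpose l u \<circ> p) u = u"
      using permutes_compose[OF _ permutes_swap_id[OF assms(2,3)]] by simp_all
    then have "transpose l u \<circ> p permutes S - {l, u}"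
      by (auto intro: permutes_superset[where S = S])
    then show "transpose l u \<circ> p \<in> {q. q permutes S - {l, u}}"
      by simp
  next
    fix q assume "q \<in> {q. q permutes S - {l, u}}"
    then have "q permutes S" "q l = l" "q u = u"
      by (auto intro: permutes_subset permutes_not_in)
    then show "transpose l u \<circ> q \<in> {p. p permutes S \<and> p l = u \<and> p u = l}"
      using permutes_compose[OF _ permutes_swap_id[OF assms(2,3)]] by simp
  qed (simp_all add: involution)
  finally show ?thesis .
qed

lemma det_on_antidiagonal_block:
  fixes M :: "'a \<Rightarrow> 'a \<Rightarrow> 'b::comm_ring_1"
  assumes fin: "finite S" and "l \<in> S" "u \<in> S" "l \<noteq> u"
    and row: "\<And>j. j \<in> S \<Longrightarrow> j \<noteq> u \<Longrightarrow> M l j = 0"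
    and col: "\<And>i. i \<in> S \<Longrightarrow> i \<noteq> u \<Longrightarrow> M i l = 0"
  shows "det_on S M = - (M l u * M u l) * det_on (S - {l, u}) M"
proof -
  have vanish: "(\<Prod>i\<in>S. M i (p i)) = 0" if p: "p permutes S" and "\<not> (p l = u \<and> p u = l)" for p
  proof (cases "p l = u")
    case False
    then show ?thesis
      using row[of "p l"] permutes_in_image[OF p] fin \<open>l \<in> S\<close> by (auto intro: prod_zero)
  next
    case True
    \<comment> \<open>as p u \<noteq> l, the row that p sends to column l is neither l nor u\<close>
    define k where "k = inv p l"
    have "p k = l" "k \<in> S"
      unfolding k_def using p \<open>l \<in> S\<close> by (auto simp: permutes_inverses permutes_inv permutes_in_image)
    moreover have "k \<noteq> u"
      using \<open>p k = l\<close> True that(2) by auto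
    ultimately show ?thesis
      using col[of k] fin by (auto intro: prod_zero)
  qed
  have swapped: "of_int (sign (transpose l u \<circ> q)) * (\<Prod>i\<in>S. M i ((transpose l u \<circ> q) i))
      = - (M l u * M u l) * (of_int (sign q) * (\<Prod>i\<in>S - {l, u}. M i (q i)))"
    if q: "q permutes S - {l, u}" for q
  proof -
    have ql: "q l = l" and qu: "q u = u"
      using q by (auto intro: permutes_not_in)
    have "q i \<notin> {l, u}" if "i \<in> S - {l, u}" for i
      using permutes_in_image[OF q] that by auto
    then have rest: "(\<Prod>i\<in>S - {l, u}. M i ((transpose l u \<circ> q) i)) = (\<Prod>i\<in>S - {l, u}. M i (q i))"
      by (intro prod.cong) auto
    have split: "(\<Prod>i\<in>S. f i) = f l * f u * (\<Prod>i\<in>S - {l, u}. f i)" for f :: "'a \<Rightarrow> 'b"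
    proof -
      have "S - {l} - {u} = S - {l, u}" by auto
      then show ?thesis
        using fin assms(2-4) prod.remove[of S l f] prod.remove[of "S - {l}" u f] by (simp add: mult.assoc)
    qed
    have "(\<Prod>i\<in>S. M i ((transpose l u \<circ> q) i)) = M l u * M u l * (\<Prod>i\<in>S - {l, u}. M i (q i))"
      unfolding split[of "\<lambda>i. M i ((transpose l u \<circ> q) i)"] rest using ql qu by simp
    moreover have "sign (transpose l u \<circ> q) = - sign q"
      using permutes_imp_permutation[OF _ q] fin assms(4)
      by (simp add: sign_compose permutation_swap_id sign_swap_id)
    ultimately show ?thesis by simp
  qed
  have "det_on S M = (\<Sum>p | p permutes S. if p l = u \<and> p u = l
      then of_int (sign p) * (\<Prod>i\<in>S. M i (p i)) else 0)"
    unfolding det_on_def using vanish by (intro sum.cong) auto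
  also have "\<dots> = (\<Sum>q | q permutes S - {l, u}.
      of_int (sign (transpose l u \<circ> q)) * (\<Prod>i\<in>S. M i ((transpose l u \<circ> q) i)))"
    by (rule sum_permutes_if_swapped[OF fin assms(2,3)])
  also have "\<dots> = (\<Sum>q | q permutes S - {l, u}.
      - (M l u * M u l) * (of_int (sign q) * (\<Prod>i\<in>S - {l, u}. M i (q i))))"
    using swapped by (intro sum.cong) auto
  also have "\<dots> = - (M l u * M u l) * det_on (S - {l, u}) M"
    unfolding det_on_def by (rule sum_distrib_left[symmetric])
  finally show ?thesis .
qed

lemma det_on_leaf_expansion:
  fixes M :: "'a \<Rightarrow> 'a \<Rightarrow> 'b::comm_ring_1"
  assumes fin: "finite S" and "l \<in> S" "u \<in> S" "l \<noteq> u"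
    and row: "\<And>j. j \<in> S \<Longrightarrow> j \<notin> {l, u} \<Longrightarrow> M l j = 0"
    and col: "\<And>i. i \<in> S \<Longrightarrow> i \<notin> {l, u} \<Longrightarrow> M i l = 0"
  shows "det_on S M = M l l * det_on (S - {l}) M - M l u * M u l * det_on (S - {l, u}) M"
proof -
  define K1 where "K1 i j = (if i = l then if j = l then M l l else 0 else M i j)" for i j
  define K2 where "K2 i j = (if i = l then if j = u then M l u else 0 else M i j)" for i j
  have "det_on S M = det_on S K1 + det_on S K2"
    using row assms(2-4) by (intro det_on_row_add[OF fin \<open>l \<in> S\<close>]) (auto simp: K1_def K2_def)
  also have "det_on S K1 = M l l * det_on (S - {l}) M"
    using det_on_diagonal_row[OF fin \<open>l \<in> S\<close>, of K1] det_on_cong[of "S - {l}" K1 M]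
    by (simp add: K1_def)
  also have "det_on S K2 = - (M l u * M u l) * det_on (S - {l, u}) M"
    using det_on_antidiagonal_block[OF fin assms(2-4), of K2] det_on_cong[of "S - {l, u}" K2 M] col assms(4)
    by (simp add: K2_def)
  finally show ?thesis by simp
qed

definition leaf :: "('a \<Rightarrow> 'a \<Rightarrow> bool) \<Rightarrow> 'a \<Rightarrow> 'a \<Rightarrow> bool" where
  "leaf E l u \<longleftrightarrow> E l u \<and> (\<forall>w. E l w \<longrightarrow> w = u)"

definition delete_vertex :: "('a \<Rightarrow> 'a \<Rightarrow> bool) \<Rightarrow> 'a \<Rightarrow> 'a \<Rightarrow> 'a \<Rightarrow> bool" where
  "delete_vertex E l a b \<longleftrightarrow> E a b \<and> a \<noteq> l \<and> b \<noteq> l"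

lemma simple_graphD:
  assumes "simple_graph V E"
  shows "finite V" "E a b \<Longrightarrow> a \<in> V" "E a b \<Longrightarrow> b \<in> V" "E a b \<Longrightarrow> E b a" "\<not> E a a"
  using assms unfolding simple_graph_def by blast+

lemma leafD:
  assumes "simple_graph V E" "leaf E l u"
  shows "l \<in> V" "u \<in> V" "l \<noteq> u" "E l a \<longleftrightarrow> a = u" "E a l \<longleftrightarrow> a = u"
  using assms simple_graphD[OF assms(1)] unfolding leaf_def by metis+

lemma finite_edges:
  assumes "simple_graph V E"
  shows "finite (edges E)"
proof -
  have "edges E \<subseteq> (\<lambda>(a, b). {a, b}) ` (V \<times> V)"
    unfolding edges_def using simple_graphD[OF assms] by auto
  then show ?thesis
    using simple_graphD(1)[OF assms] finite_subset by blast
qed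

lemma sum_degree_le_card_edges:
  assumes G: "simple_graph V E"
  shows "(\<Sum>v\<in>V. degree V E v) \<le> 2 * card (edges E)"
proof -
  define arcs_of where "arcs_of e = {(a, b). E a b \<and> {a, b} = e}" for e
  have "(\<Sum>v\<in>V. degree V E v) = card (SIGMA v:V. {w \<in> V. E v w})"
    unfolding degree_def using simple_graphD(1)[OF G] by simp
  also have "(SIGMA v:V. {w \<in> V. E v w}) = (\<Union>e\<in>edges E. arcs_of e)"
    unfolding arcs_of_def edges_def using simple_graphD[OF G] by blast
  also have "card \<dots> \<le> (\<Sum>e\<in>edges E. card (arcs_of e))"
    by (rule card_UN_le[OF finite_edges[OF G]])
  also have "\<dots> \<le> (\<Sum>e\<in>edges E. 2)"
  proof (rule sum_mono)
    fix e assume "e \<in> edges E"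
    then obtain x y where "e = {x, y}"
      unfolding edges_def by blast
    then have "arcs_of e \<subseteq> {(x, y), (y, x)}"
      unfolding arcs_of_def by (auto simp: doubleton_eq_iff)
    then have "card (arcs_of e) \<le> card {(x, y), (y, x)}"
      by (intro card_mono) auto
    also have "\<dots> \<le> 2"
      by (cases "x = y") simp_all
    finally show "card (arcs_of e) \<le> 2" .
  qed
  finally show ?thesis by simp
qed

lemma tree_has_leaf:
  assumes T: "is_tree V E" and two: "card V \<ge> 2"
  obtains l u where "leaf E l u"
proof -
  have G: "simple_graph V E" and conn: "connected_graph V E" and
    card_edges: "card (edges E) = card V - 1"
    using T unfolding is_tree_def by auto
  have "\<exists>l\<in>V. degree V E l \<le> 1"
  proof (rule ccontr)
    assume "\<not> ?thesis"
    then have "(\<Sum>v\<in>V. 2) \<le> (\<Sum>v\<in>V. degree V E v)"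
      by (intro sum_mono) auto
    then show False
      using sum_degree_le_card_edges[OF G] card_edges two by simp
  qed
  then obtain l where "l \<in> V" and deg: "degree V E l \<le> 1" ..
  obtain x where "x \<in> V" "x \<noteq> l"
    using two \<open>l \<in> V\<close> by (metis card_le_Suc0_iff_eq[OF simple_graphD(1)[OF G]] not_less_eq_eq numeral_2_eq_2)
  then have "E\<^sup>*\<^sup>* l x"
    using conn \<open>l \<in> V\<close> unfolding connected_graph_def by blast
  then obtain u where "E l u"
    using \<open>x \<noteq> l\<close> by (metis converse_rtranclpE)
  moreover have "w = u" if "E l w" for w
  proof -
    have "w \<in> {w \<in> V. E l w}" "u \<in> {w \<in> V. E l w}"
      using that \<open>E l u\<close> simple_graphD(3)[OF G] by auto
    then show ?thesis
      using deg card_le_Suc0_iff_eq[of "{w \<in> V. E l w}"] simple_graphD(1)[OF G]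
      unfolding degree_def by auto
  qed
  ultimately show thesis
    using that unfolding leaf_def by blast
qed

lemma rtranclp_delete_leaf:
  assumes G: "simple_graph V E" and "leaf E l u"
    and "E\<^sup>*\<^sup>* a b" "a \<noteq> l" "b \<noteq> l"
  shows "(delete_vertex E l)\<^sup>*\<^sup>* a b"
proof -
  \<comment> \<open>a walk can enter and leave l only through u\<close>
  have "(b \<noteq> l \<longrightarrow> (delete_vertex E l)\<^sup>*\<^sup>* a b) \<and> (b = l \<longrightarrow> (delete_vertex E l)\<^sup>*\<^sup>* a u)"
    using \<open>E\<^sup>*\<^sup>* a b\<close>
  proof (induction rule: rtranclp_induct)
    case base
    then show ?case using \<open>a \<noteq> l\<close> by simp
  next
    case (step b c)
    consider "c = l" | "b = l" "c \<noteq> l" | "b \<noteq> l" "c \<noteq> l"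
      by blast
    then show ?case
    proof cases
      case 1
      then show ?thesis
        using step leafD[OF assms(1,2)] by metis
    next
      case 2
      then have "c = u"
        using step.hyps(2) \<open>leaf E l u\<close> unfolding leaf_def by blast
      then show ?thesis
        using step.IH 2 by simp
    next
      case 3
      then have "delete_vertex E l b c"
        using step.hyps(2) unfolding delete_vertex_def by blast
      then show ?thesis
        using step.IH 3 by (simp add: rtranclp.rtrancl_into_rtrancl)
    qed
  qed
  then show ?thesis
    using \<open>b \<noteq> l\<close> by blast
qed

lemma edges_delete_leaf:
  assumes "simple_graph V E" "leaf E l u"
  shows "edges (delete_vertex E l) = edges E - {{l, u}}"
proof (intro set_eqI iffI)
  fix e assume "e \<in> edges (delete_vertex E l)"
  then obtain a b where "e = {a, b}" "E a b" "a \<noteq> l" "b \<noteq> l"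
    unfolding edges_def delete_vertex_def by blast
  moreover have "{a, b} \<noteq> {l, u}"
    using \<open>a \<noteq> l\<close> \<open>b \<noteq> l\<close> by (simp add: doubleton_eq_iff)
  ultimately show "e \<in> edges E - {{l, u}}"
    unfolding edges_def by blast
next
  fix e assume "e \<in> edges E - {{l, u}}"
  then obtain a b where "e = {a, b}" "E a b" "{a, b} \<noteq> {l, u}"
    unfolding edges_def by blast
  moreover have "a \<noteq> l"
    using calculation assms(2) unfolding leaf_def by blast
  moreover have "b \<noteq> l"
  proof
    assume "b = l"
    then have "a = u"
      using \<open>E a b\<close> leafD(5)[OF assms] by simp
    then show False
      using \<open>b = l\<close> \<open>{a, b} \<noteq> {l, u}\<close> by (simp add: insert_commute)
  qed
  ultimately show "e \<in> edges (delete_vertex E l)"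
    unfolding edges_def delete_vertex_def by blast
qed

lemma is_tree_delete_leaf:
  assumes T: "is_tree V E" and leaf: "leaf E l u"
  shows "is_tree (V - {l}) (delete_vertex E l)"
proof -
  have G: "simple_graph V E" and conn: "connected_graph V E" and
    card_edges: "card (edges E) = card V - 1"
    using T unfolding is_tree_def by auto
  have "simple_graph (V - {l}) (delete_vertex E l)"
    using G unfolding simple_graph_def delete_vertex_def by auto
  moreover have "connected_graph (V - {l}) (delete_vertex E l)"
    unfolding connected_graph_def
  proof (intro ballI)
    fix a b assume "a \<in> V - {l}" "b \<in> V - {l}"
    then show "(delete_vertex E l)\<^sup>*\<^sup>* a b"
      using conn rtranclp_delete_leaf[OF G leaf] unfolding connected_graph_def by simp
  qed
  moreover have "{l, u} \<in> edges E"
    using leafD(4)[OF G leaf] unfolding edges_def by blast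
  then have "card (edges (delete_vertex E l)) = card (V - {l}) - 1"
    using card_edges leafD(1)[OF G leaf] simple_graphD(1)[OF G] finite_edges[OF G]
    by (simp add: edges_delete_leaf[OF G leaf])
  ultimately show ?thesis
    using leafD(2,3)[OF G leaf] unfolding is_tree_def by blast
qed

lemma degree_leaf:
  assumes "simple_graph V E" "leaf E l u"
  shows "degree V E l = 1"
proof -
  have "{w \<in> V. E l w} = {u}"
    using leafD[OF assms] by blast
  then show ?thesis
    unfolding degree_def by simp
qed

lemma degree_delete_leaf:
  assumes G: "simple_graph V E" and leaf: "leaf E l u" and "i \<in> V - {l}"
  shows "degree V E i = degree (V - {l}) (delete_vertex E l) i + (if i = u then 1 else 0)"
proof -
  have "{w \<in> V. E i w} = {w \<in> V - {l}. delete_vertex E l i w} \<union> (if i = u then {l} else {})"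
    using leafD[OF G leaf] \<open>i \<in> V - {l}\<close> unfolding delete_vertex_def by auto
  then show ?thesis
    unfolding degree_def using simple_graphD(1)[OF G] by (simp add: card_insert_if)
qed

lemma tree_induct [consumes 1, case_names singleton leaf]:
  assumes "is_tree V E"
    and singleton: "\<And>V E a. is_tree V E \<Longrightarrow> V = {a} \<Longrightarrow> P V E"
    and leaf: "\<And>V E l u. is_tree V E \<Longrightarrow> leaf E l u \<Longrightarrow> P (V - {l}) (delete_vertex E l) \<Longrightarrow> P V E"
  shows "P V E"
  using assms(1)
proof (induction "card V" arbitrary: V E rule: less_induct)
  case less
  have "finite V" "V \<noteq> {}"
    using less.prems unfolding is_tree_def simple_graph_def by auto
  show ?case
  proof (cases "card V \<ge> 2")
    case True
    then obtain l u where lu: "leaf E l u"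
      using tree_has_leaf[OF less.prems] by blast
    then have "l \<in> V"
      using leafD(1) less.prems unfolding is_tree_def by metis
    then have "card (V - {l}) < card V"
      by (rule card_Diff1_less[OF \<open>finite V\<close>])
    then show ?thesis
      using leaf[OF less.prems lu] less.hyps is_tree_delete_leaf[OF less.prems lu] by blast
  next
    case False
    then have "card V = 1"
      using \<open>finite V\<close> \<open>V \<noteq> {}\<close> by (simp add: Suc_leI card_gt_0_iff le_antisym not_le)
    then show ?thesis
      using singleton[OF less.prems] by (auto simp: card_1_singleton_iff)
  qed
qed

lemma psi_matrix_delete_leaf:
  assumes G: "simple_graph V E" and leaf: "leaf E l u" and "i \<in> V - {l}" "j \<in> V - {l}"
  shows "psi_matrix V E i j
       = psi_matrix (V - {l}) (delete_vertex E l) i j + (if i = u \<and> j = u then [:0, -1:] else 0)"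
proof -
  have "E i j \<longleftrightarrow> delete_vertex E l i j"
    using assms(3,4) unfolding delete_vertex_def by auto
  then show ?thesis
    unfolding psi_matrix_def using degree_delete_leaf[OF G leaf \<open>i \<in> V - {l}\<close>]
    by (auto simp: of_nat_Suc)
qed

lemma psi_matrix_leaf:
  assumes G: "simple_graph V E" and leaf: "leaf E l u"
  shows "psi_matrix V E l l = [:0, -1:]" "psi_matrix V E l u = 1" "psi_matrix V E u l = 1"
    "j \<notin> {l, u} \<Longrightarrow> psi_matrix V E l j = 0" "i \<notin> {l, u} \<Longrightarrow> psi_matrix V E i l = 0"
  using leafD[OF G leaf] degree_leaf[OF G leaf] unfolding psi_matrix_def by auto

lemma det_on_psi_matrix_delete_leaf:
  assumes G: "simple_graph V E" and leaf: "leaf E l u" and T: "T \<subseteq> V - {l}"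
  shows "det_on T (psi_matrix V E) = det_on T (psi_matrix (V - {l}) (delete_vertex E l))
      + (if u \<in> T then [:0, -1:] * det_on (T - {u}) (psi_matrix (V - {l}) (delete_vertex E l)) else 0)"
proof -
  have entries: "psi_matrix V E i j
      = psi_matrix (V - {l}) (delete_vertex E l) i j + (if i = u \<and> j = u then [:0, -1:] else 0)"
    if "i \<in> T" "j \<in> T" for i j
    using psi_matrix_delete_leaf[OF G leaf, of i j] that T by blast
  show ?thesis
  proof (cases "u \<in> T")
    case True
    have "finite T"
      using simple_graphD(1)[OF G] T finite_subset by blast
    with True show ?thesis
      using det_on_add_diagonal[OF \<open>finite T\<close> True entries] by simp
  next
    case False
    then have "det_on T (psi_matrix V E) = det_on T (psi_matrix (V - {l}) (delete_vertex E l))"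
      using entries by (intro det_on_cong) auto
    with False show ?thesis
      by simp
  qed
qed

lemma det_on_insert_leaf:
  assumes G: "simple_graph V E" and leaf: "leaf E l u" and "T \<subseteq> V - {l}"
  shows "det_on (insert l T) (psi_matrix V E)
       = [:0, -1:] * det_on T (psi_matrix V E) - (if u \<in> T then det_on (T - {u}) (psi_matrix V E) else 0)"
proof -
  have fin: "finite (insert l T)"
    using simple_graphD(1)[OF G] \<open>T \<subseteq> V - {l}\<close> finite_subset by blast
  have "l \<notin> T"
    using \<open>T \<subseteq> V - {l}\<close> by blast
  then have "insert l T - {l} = T" "insert l T - {l, u} = T - {u}"
    by auto
  moreover note psi_matrix_leaf[OF G leaf] leafD(3)[OF G leaf]
  ultimately show ?thesis
    using det_on_leaf_expansion[OF fin, of l u "psi_matrix V E"]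
      det_on_diagonal_row[OF fin, of l "psi_matrix V E"]
    by (cases "u \<in> T") auto
qed

lemma psi_delete_leaf:
  assumes G: "simple_graph V E" and leaf: "leaf E l u"
  shows "psi V E = [:0, -1:] * psi (V - {l}) (delete_vertex E l)
      + [:-1, 0, 1:] * psi_del (V - {l}) (delete_vertex E l) u"
proof -
  let ?M' = "psi_matrix (V - {l}) (delete_vertex E l)"
  have V: "insert l (V - {l}) = V"
    using leafD(1)[OF G leaf] by blast
  have "psi V E = [:0, -1:] * det_on (V - {l}) (psi_matrix V E) - det_on (V - {l} - {u}) (psi_matrix V E)"
    using det_on_insert_leaf[OF G leaf, of "V - {l}"] leafD(2,3)[OF G leaf] unfolding psi_def V by simp
  also have "det_on (V - {l}) (psi_matrix V E) = det_on (V - {l}) ?M' + [:0, -1:] * det_on (V - {l} - {u}) ?M'"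
    using det_on_psi_matrix_delete_leaf[OF G leaf, of "V - {l}"] leafD(2,3)[OF G leaf] by simp
  also have "det_on (V - {l} - {u}) (psi_matrix V E) = det_on (V - {l} - {u}) ?M'"
    using det_on_psi_matrix_delete_leaf[OF G leaf, of "V - {l} - {u}"] by auto
  finally show ?thesis
    unfolding psi_def psi_del_def by (simp add: algebra_simps)
qed

lemma psi_del_leaf:
  assumes G: "simple_graph V E" and leaf: "leaf E l u"
  shows "psi_del V E l = psi (V - {l}) (delete_vertex E l) + [:0, -1:] * psi_del (V - {l}) (delete_vertex E l) u"
  using det_on_psi_matrix_delete_leaf[OF G leaf, of "V - {l}"] leafD(2,3)[OF G leaf]
  unfolding psi_def psi_del_def by simp

lemma psi_del_leaf_neighbour:
  assumes G: "simple_graph V E" and leaf: "leaf E l u"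
  shows "psi_del V E u = [:0, -1:] * psi_del (V - {l}) (delete_vertex E l) u"
proof -
  let ?T = "V - {l} - {u}"
  have V: "V - {u} = insert l ?T"
    using leafD(1,3)[OF G leaf] by blast
  have "psi_del V E u = [:0, -1:] * det_on ?T (psi_matrix V E)"
    using det_on_insert_leaf[OF G leaf, of ?T] unfolding psi_del_def V by auto
  also have "det_on ?T (psi_matrix V E) = psi_del (V - {l}) (delete_vertex E l) u"
    using det_on_psi_matrix_delete_leaf[OF G leaf, of ?T] unfolding psi_del_def by auto
  finally show ?thesis .
qed

lemma psi_del_delete_leaf:
  assumes G: "simple_graph V E" and leaf: "leaf E l u" and v: "v \<in> V - {l, u}"
  shows "psi_del V E v = [:0, -1:] * psi_del (V - {l}) (delete_vertex E l) v
      + [:-1, 0, 1:] * det_on (V - {l} - {v} - {u}) (psi_matrix (V - {l}) (delete_vertex E l))"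
proof -
  let ?T = "V - {l} - {v}" and ?M' = "psi_matrix (V - {l}) (delete_vertex E l)"
  have V: "V - {v} = insert l ?T"
    using leafD(1)[OF G leaf] v by blast
  have "u \<in> ?T"
    using leafD(2,3)[OF G leaf] v by blast
  then have "psi_del V E v = [:0, -1:] * det_on ?T (psi_matrix V E) - det_on (?T - {u}) (psi_matrix V E)"
    using det_on_insert_leaf[OF G leaf, of ?T] unfolding psi_del_def V by auto
  also have "det_on ?T (psi_matrix V E) = det_on ?T ?M' + [:0, -1:] * det_on (?T - {u}) ?M'"
    using det_on_psi_matrix_delete_leaf[OF G leaf, of ?T] \<open>u \<in> ?T\<close> by auto
  also have "det_on (?T - {u}) (psi_matrix V E) = det_on (?T - {u}) ?M'"
    using det_on_psi_matrix_delete_leaf[OF G leaf, of "?T - {u}"] by auto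
  finally show ?thesis
    unfolding psi_del_def by (simp add: algebra_simps)
qed

lemma psi_tilde_eqI:
  assumes "psi V E = [:-1, 0, 1:] * q"
  shows "psi_tilde V E = q"
  unfolding psi_tilde_def assms by (rule nonzero_mult_div_cancel_left) simp

lemma tree_psi_values:
  assumes "is_tree V E"
  shows "psi V E = [:-1, 0, 1:] * psi_tilde V E \<and>
    (\<forall>x::real. x\<^sup>2 = 1 \<longrightarrow> poly (psi_tilde V E) x = real (card V - 1) * (- x) ^ (card V - 2)
       \<and> (\<forall>v\<in>V. poly (psi_del V E v) x = (- x) ^ (card V - 1)))"
  using assms
proof (induction rule: tree_induct)
  case (singleton V E a)
  then have "\<not> E v w" for v w
    unfolding is_tree_def simple_graph_def by blast
  then have "psi_matrix V E a a = 0"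
    unfolding psi_matrix_def degree_def by simp
  then have "psi V E = 0"
    unfolding psi_def \<open>V = {a}\<close> det_on_def by simp
  moreover have "psi_del V E a = 1"
    unfolding psi_del_def \<open>V = {a}\<close> det_on_def by simp
  ultimately show ?case
    using \<open>V = {a}\<close> by (simp add: psi_tilde_def)
next
  case (leaf V E l u)
  let ?V' = "V - {l}" and ?E' = "delete_vertex E l"
  have G: "simple_graph V E"
    using \<open>is_tree V E\<close> unfolding is_tree_def by blast
  note IH = leaf.IH
  have "u \<in> ?V'" "finite ?V'"
    using leafD(2,3)[OF G leaf.hyps(2)] simple_graphD(1)[OF G] by auto
  then obtain k where k: "card ?V' = Suc k"
    by (metis card_gt_0_iff empty_iff gr0_implies_Suc)
  then have card_V: "card V = Suc (Suc k)"
    using leafD(1)[OF G leaf.hyps(2)] simple_graphD(1)[OF G] by (metis card_Suc_Diff1)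
  have tilde: "psi_tilde V E = [:0, -1:] * psi_tilde ?V' ?E' + psi_del ?V' ?E' u"
    using psi_delete_leaf[OF G leaf.hyps(2)] IH by (intro psi_tilde_eqI) (simp add: algebra_simps)
  have "psi V E = [:-1, 0, 1:] * psi_tilde V E"
    using psi_delete_leaf[OF G leaf.hyps(2)] IH unfolding tilde by (simp add: algebra_simps)
  moreover have "poly (psi_tilde V E) x = real (card V - 1) * (- x) ^ (card V - 2)
      \<and> (\<forall>v\<in>V. poly (psi_del V E v) x = (- x) ^ (card V - 1))" if "x\<^sup>2 = 1" for x :: real
  proof -
    have Z: "poly [:-1, 0, 1:] x = 0"
      using that by (simp add: power2_eq_square)
    have IH_x: "poly (psi_tilde ?V' ?E') x = real k * (- x) ^ (k - 1)"
        "\<And>v. v \<in> ?V' \<Longrightarrow> poly (psi_del ?V' ?E' v) x = (- x) ^ k"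
        "poly (psi ?V' ?E') x = 0"
      using IH that Z k by auto
    have "poly (psi_tilde V E) x = real (Suc k) * (- x) ^ k"
      unfolding tilde using IH_x(1) IH_x(2)[OF \<open>u \<in> ?V'\<close>]
      by (cases k) (simp_all add: algebra_simps)
    moreover have "poly (psi_del V E v) x = (- x) ^ Suc k" if "v \<in> V" for v
    proof -
      consider "v = l" | "v = u" | "v \<in> V - {l, u}"
        using \<open>v \<in> V\<close> by blast
      then show ?thesis
      proof cases
        case 1
        then show ?thesis
          using IH_x(2)[OF \<open>u \<in> ?V'\<close>] IH_x(3) by (simp add: psi_del_leaf[OF G leaf.hyps(2)])
      next
        case 2
        then show ?thesis
          using IH_x(2)[OF \<open>u \<in> ?V'\<close>] by (simp add: psi_del_leaf_neighbour[OF G leaf.hyps(2)])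
      next
        case 3
        then show ?thesis
          using IH_x(2)[of v] Z by (simp add: psi_del_delete_leaf[OF G leaf.hyps(2)])
      qed
    qed
    ultimately show ?thesis
      unfolding card_V by simp
  qed
  ultimately show ?case
    by blast
qed

theorem lemma2p5:
  fixes V :: "'a set" and E :: "'a \<Rightarrow> 'a \<Rightarrow> bool"
  assumes "is_tree V E" and "card V \<ge> 2"
  shows "(\<forall>v\<in>V. poly (psi_del V E v) 1 = (-1) ^ (card V - 1)
                 \<and> poly (psi_del V E v) (-1) = 1 ^ (card V - 1))
         \<and> poly (psi_tilde V E) 1 = real (card V - 1) * (-1) ^ (card V - 2)
         \<and> poly (psi_tilde V E) (-1) = real (card V - 1) * 1 ^ (card V - 2)"
  using tree_psi_values[OF assms(1)] by (metis minus_minus power2_minus power_one)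

end
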